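(* Let $X$ be a real linear space, $T$ an infinite index set, and $f, f_t : X \to \overline{\mathbb{R}} := \mathbb{R}\cup\{\pm\infty\}$ ($t \in T$) convex proper functions. Let $M := \bigcap_{t\in T} \operatorname{dom} f_t$. Let $v:\mathbb{R}^T\to\overline{\mathbb{R}}$ be $v(y) := \inf\{f(x) : f_t(x)\le y_t \text{ for all } t\in T\}$, where $\mathbb{R}^T$ carries the product topology, and let $\overline{v}$ be the lower semicontinuous hull of $v$, so that $\overline{v}(0_Y) = \sup_{V} \inf_{y\in V} v(y)$, the supremum being over all neighborhoods $V$ of the origin $0_Y$ of $\mathbb{R}^T$. Then $$\overline{v}(0_Y)=\sup_{\varepsilon>0,\ H\in\mathcal{F}(T)}\ \inf_{x\in M}\{f(x): f_t(x)\le\varepsilon \text{ for all } t\in H\}.$$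
   Context: $\operatorname{dom} g := \{x : g(x)<+\infty\}$; a proper function never takes the value $-\infty$ and has nonempty domain. $\mathcal{F}(T)$ is the family of nonempty finite subsets of $T$. Convention: $\inf\emptyset=+\infty$. *)

theory Defs
  imports "HOL-Analysis.Analysis" "HOL-Library.Extended_Real"
begin

definition edom :: "('a \<Rightarrow> ereal) \<Rightarrow> 'a set" where
  "edom g = {x. g x < \<infinity>}"

definition econvex :: "('a::real_vector \<Rightarrow> ereal) \<Rightarrow> bool" where
  "econvex g \<longleftrightarrow> convex {(x, r::real). g x \<le> ereal r}"

definition eproper :: "('a \<Rightarrow> ereal) \<Rightarrow> bool" where
  "eproper g \<longleftrightarrow> (\<forall>x. g x \<noteq> -\<infinity>) \<and> edom g \<noteq> {}"

definition valfun :: "('a \<Rightarrow> ereal) \<Rightarrow> ('b \<Rightarrow> 'a \<Rightarrow> ereal) \<Rightarrow> ('b \<Rightarrow> real) \<Rightarrow> ereal" where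
  "valfun f ft y = Inf {f x | x. \<forall>t. ft t x \<le> ereal (y t)}"

end

theory Submission
  imports Defs
begin

text \<open>The neighbourhoods of \<open>0\<close> in the product topology of \<open>\<real>\<^sup>T\<close> are exactly the sets
  containing a box \<open>{y. \<forall>t\<in>H. \<bar>y t\<bar> < \<epsilon>}\<close> with \<open>H\<close> finite, so both sides are suprema
  indexed by \<open>(\<epsilon>, H)\<close>. A point \<open>x \<in> M\<close> with \<open>f\<^sub>t x \<le> \<epsilon>/2\<close> on \<open>H\<close> is feasible for the
  perturbation \<open>y t = max (f\<^sub>t x) 0\<close>, which lies in the \<open>\<epsilon>\<close>-box; conversely, a point feasible
  for some \<open>y\<close> in the open set \<open>{y. \<forall>t\<in>H. y t < \<epsilon>}\<close> lies in \<open>M\<close> and satisfies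
  \<open>f\<^sub>t x \<le> \<epsilon>\<close> on \<open>H\<close>.\<close>

lemma open_fun_contains_box:
  fixes U :: "('b \<Rightarrow> 'c::metric_space) set"
  assumes "open U" "a \<in> U"
  obtains \<epsilon> H where "\<epsilon> > 0" "finite H" "H \<noteq> {}"
    "{y. \<forall>t\<in>H. dist (y t) (a t) < \<epsilon>} \<subseteq> U"
proof -
  have "openin (product_topology (\<lambda>i. euclidean) UNIV) U"
    using assms(1) by (simp add: open_fun_def)
  from product_topology_open_contains_basis[OF this assms(2)]
  obtain X where aX: "a \<in> (\<Pi>\<^sub>E t\<in>UNIV. X t)" and open_X: "\<And>t. open (X t)"
    and fin: "finite {t. X t \<noteq> UNIV}" and XU: "(\<Pi>\<^sub>E t\<in>UNIV. X t) \<subseteq> U"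
    by auto
  have "\<forall>t. \<exists>e>0. ball (a t) e \<subseteq> X t"
    using aX open_X by (meson PiE_E UNIV_I openE)
  then obtain e where e_pos: "\<And>t. e t > 0" and e_ball: "\<And>t. ball (a t) (e t) \<subseteq> X t"
    by metis
  define H where "H = insert undefined {t. X t \<noteq> UNIV}"
  have "finite H" "H \<noteq> {}" using fin by (auto simp: H_def)
  have "Min (e ` H) > 0" using \<open>finite H\<close> \<open>H \<noteq> {}\<close> e_pos by simp
  moreover have "{y. \<forall>t\<in>H. dist (y t) (a t) < Min (e ` H)} \<subseteq> U"
  proof
    fix y assume y: "y \<in> {y. \<forall>t\<in>H. dist (y t) (a t) < Min (e ` H)}"
    have "y t \<in> X t" if "X t \<noteq> UNIV" for t
    proof -
      have "t \<in> H" using that by (simp add: H_def)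
      then have "dist (y t) (a t) < Min (e ` H)" "Min (e ` H) \<le> e t"
        using y \<open>finite H\<close> by simp_all
      then have "dist (a t) (y t) < e t" by (simp add: dist_commute)
      then show ?thesis using e_ball[of t] by auto
    qed
    then have "y \<in> (\<Pi>\<^sub>E t\<in>UNIV. X t)" by auto
    then show "y \<in> U" using XU by auto
  qed
  ultimately show ?thesis using that \<open>finite H\<close> \<open>H \<noteq> {}\<close> by blast
qed

lemma open_fun_less_box:
  fixes \<epsilon> :: "'c::linorder_topology"
  assumes "finite H"
  shows "open {y :: 'b \<Rightarrow> 'c. \<forall>t\<in>H. y t < \<epsilon>}"
  using product_topology_basis'[of H "\<lambda>_. {..<\<epsilon>}" id] assms by simp

lemma valfun_le:
  assumes "\<forall>t. ft t x \<le> ereal (y t)"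
  shows "valfun f ft y \<le> f x"
  using assms unfolding valfun_def by (auto intro: Inf_lower)

lemma Inf_relaxed_le_valfun:
  assumes "\<forall>t\<in>H. y t \<le> \<epsilon>"
  shows "Inf {f x | x. x \<in> (\<Inter>t. edom (ft t)) \<and> (\<forall>t\<in>H. ft t x \<le> ereal \<epsilon>)}
           \<le> valfun f ft y"
  unfolding valfun_def
proof (rule Inf_mono, clarify)
  fix x assume x: "\<forall>t. ft t x \<le> ereal (y t)"
  have "ft t x < \<infinity>" for t
    using x[rule_format, of t] by (cases "ft t x") auto
  then have "x \<in> (\<Inter>t. edom (ft t))"
    by (simp add: edom_def)
  moreover have "\<forall>t\<in>H. ft t x \<le> ereal \<epsilon>"
    using x assms by (meson ereal_less_eq(3) order_trans)
  ultimately show "\<exists>z \<in> {f x | x. x \<in> (\<Inter>t. edom (ft t)) \<and> (\<forall>t\<in>H. ft t x \<le> ereal \<epsilon>)}.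
      z \<le> f x" by blast
qed

lemma small_feasible_perturbation:
  assumes "x \<in> (\<Inter>t. edom (ft t))" "\<forall>t\<in>H. ft t x \<le> ereal \<epsilon>" "0 \<le> \<epsilon>"
  obtains y where "\<forall>t. ft t x \<le> ereal (y t)" "\<forall>t\<in>H. \<bar>y t\<bar> \<le> \<epsilon>"
proof
  let ?y = "\<lambda>t. max (real_of_ereal (ft t x)) 0"
  show "\<forall>t. ft t x \<le> ereal (?y t)"
  proof
    fix t
    have "ft t x < \<infinity>" using assms(1) by (auto simp: edom_def)
    then show "ft t x \<le> ereal (?y t)"
      by (cases "ft t x") auto
  qed
  show "\<forall>t\<in>H. \<bar>?y t\<bar> \<le> \<epsilon>"
  proof
    fix t assume "t \<in> H"
    then have "ft t x \<le> ereal \<epsilon>" using assms(2) by blast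
    then show "\<bar>?y t\<bar> \<le> \<epsilon>" using assms(3) by (cases "ft t x") auto
  qed
qed

lemma INF_valfun_box_le_Inf_relaxed:
  assumes "0 \<le> \<delta>" "\<delta> < \<epsilon>"
  shows "(INF y \<in> {y. \<forall>t\<in>H. \<bar>y t\<bar> < \<epsilon>}. valfun f ft y)
           \<le> Inf {f x | x. x \<in> (\<Inter>t. edom (ft t)) \<and> (\<forall>t\<in>H. ft t x \<le> ereal \<delta>)}"
proof (rule Inf_greatest, clarify)
  fix x assume x: "x \<in> (\<Inter>t. edom (ft t))" "\<forall>t\<in>H. ft t x \<le> ereal \<delta>"
  obtain y where y: "\<forall>t. ft t x \<le> ereal (y t)" "\<forall>t\<in>H. \<bar>y t\<bar> \<le> \<delta>"
    using small_feasible_perturbation[OF x \<open>0 \<le> \<delta>\<close>] by blast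
  have "y \<in> {y. \<forall>t\<in>H. \<bar>y t\<bar> < \<epsilon>}" using y(2) \<open>\<delta> < \<epsilon>\<close> by force
  then have "(INF y \<in> {y. \<forall>t\<in>H. \<bar>y t\<bar> < \<epsilon>}. valfun f ft y) \<le> valfun f ft y"
    by (rule INF_lower)
  also have "\<dots> \<le> f x" using y(1) by (rule valfun_le)
  finally show "(INF y \<in> {y. \<forall>t\<in>H. \<bar>y t\<bar> < \<epsilon>}. valfun f ft y) \<le> f x" .
qed

theorem lemma2p1:
  fixes f :: "'a::real_vector \<Rightarrow> ereal"
    and ft :: "'b \<Rightarrow> 'a \<Rightarrow> ereal"
  assumes "infinite (UNIV :: 'b set)"
    and "econvex f" and "eproper f"
    and "\<And>t. econvex (ft t)" and "\<And>t. eproper (ft t)"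
  shows "(SUP V \<in> {V :: ('b \<Rightarrow> real) set. \<exists>U. open U \<and> (\<lambda>t. 0) \<in> U \<and> U \<subseteq> V}.
            INF y \<in> V. valfun f ft y)
       = (SUP p \<in> {(\<epsilon>::real, H :: 'b set). \<epsilon> > 0 \<and> finite H \<and> H \<noteq> {}}.
            Inf {f x | x. x \<in> (\<Inter>t. edom (ft t)) \<and> (\<forall>t \<in> snd p. ft t x \<le> ereal (fst p))})"
  (is "?L = (SUP p \<in> ?P. ?S p)")
proof (rule antisym)
  show "?L \<le> (SUP p \<in> ?P. ?S p)"
  proof (rule SUP_least, clarify)
    fix U V :: "('b \<Rightarrow> real) set"
    assume "open U" "(\<lambda>t. 0) \<in> U" "U \<subseteq> V"
    obtain \<epsilon> H where "\<epsilon> > 0" "finite H" "H \<noteq> {}"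
      and box: "{y. \<forall>t\<in>H. dist (y t) 0 < \<epsilon>} \<subseteq> U"
      using open_fun_contains_box[OF \<open>open U\<close> \<open>(\<lambda>t. 0) \<in> U\<close>] by blast
    have "{y. \<forall>t\<in>H. \<bar>y t\<bar> < \<epsilon>} \<subseteq> V"
      using box \<open>U \<subseteq> V\<close> by (simp add: dist_real_def)
    then have "(INF y \<in> V. valfun f ft y) \<le> (INF y \<in> {y. \<forall>t\<in>H. \<bar>y t\<bar> < \<epsilon>}. valfun f ft y)"
      by (rule INF_superset_mono) simp
    also have "\<dots> \<le> ?S (\<epsilon>/2, H)"
      using INF_valfun_box_le_Inf_relaxed[of "\<epsilon>/2" \<epsilon>] \<open>\<epsilon> > 0\<close> by simp
    also have "\<dots> \<le> (SUP p \<in> ?P. ?S p)"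
      using \<open>\<epsilon> > 0\<close> \<open>finite H\<close> \<open>H \<noteq> {}\<close> by (intro SUP_upper) auto
    finally show "(INF y \<in> V. valfun f ft y) \<le> (SUP p \<in> ?P. ?S p)" .
  qed
  show "(SUP p \<in> ?P. ?S p) \<le> ?L"
  proof (rule SUP_least, clarify)
    fix \<epsilon> :: real and H :: "'b set"
    assume "\<epsilon> > 0" "finite H"
    let ?V = "{y :: 'b \<Rightarrow> real. \<forall>t\<in>H. y t < \<epsilon>}"
    have "?S (\<epsilon>, H) \<le> (INF y \<in> ?V. valfun f ft y)"
      unfolding fst_conv snd_conv by (intro INF_greatest Inf_relaxed_le_valfun) auto
    also have "\<dots> \<le> ?L"
      using \<open>\<epsilon> > 0\<close> open_fun_less_box[OF \<open>finite H\<close>] by (intro SUP_upper) auto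
    finally show "?S (\<epsilon>, H) \<le> ?L" .
  qed
qed

end
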